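(* In the continuous-time scaled model described in the context, if $x_0=y_0>0$, then $\tau_N\to T$ in probability as $N\to\infty$.
   Context: Continuous-time model: $(X_t,Y_t)_{t\ge0}$ is a pure-jump Markov process with nonnegative integer values. Jumps occur at the times of a rate-one Poisson process $(\mathcal N_t)$. At a jump time $t'$, with $q=X_{t'-}/(X_{t'-}+Y_{t'-})$: with probability $q$, $Y$ decreases by $1$; with probability $1-q$, $X$ decreases by $1$. The game stops when one coordinate reaches $0$. Scaling: $x^N_t=N^{-1}X_{Nt}$, $y^N_t=N^{-1}Y_{Nt}$, with $\lim_N x^N_0=x_0$, $\lim_N y^N_0=y_0$; $T_N=x^N_0+y^N_0$, $T=x_0+y_0$; the scaled ruin time is $\tau_N=\inf\{t>0: x^N_t\wedge y^N_t=0\}$. *)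

theory Defs
  imports "HOL-Probability.Probability"
begin

text \<open>A sample point is a pair (E, U): E i are the i.i.d. Exp(1) inter-arrival times of the
  rate-one Poisson clock, U i are i.i.d. Uniform[0,1] variables deciding the i-th jump
  (Y decreases iff U < q, which has probability q).\<close>

definition game_space :: "((nat \<Rightarrow> real) \<times> (nat \<Rightarrow> real)) measure" where
  "game_space =
     (PiM UNIV (\<lambda>_::nat. density lborel (exponential_density 1)))
     \<Otimes>\<^sub>M (PiM UNIV (\<lambda>_::nat. uniform_measure lborel {0..1::real}))"

definition game_step :: "real \<Rightarrow> nat \<times> nat \<Rightarrow> nat \<times> nat" where
  "game_step u s = (case s of (a, b) \<Rightarrow>
     if a = 0 \<or> b = 0 then (a, b)
     else if u < real a / (real a + real b) then (a, b - 1) else (a - 1, b))"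

fun jump_chain :: "nat \<times> nat \<Rightarrow> (nat \<Rightarrow> real) \<Rightarrow> nat \<Rightarrow> nat \<times> nat" where
  "jump_chain s0 U 0 = s0"
| "jump_chain s0 U (Suc k) = game_step (U k) (jump_chain s0 U k)"

definition arrival :: "(nat \<Rightarrow> real) \<Rightarrow> nat \<Rightarrow> real" where
  "arrival E k = (\<Sum>i<k. E i)"

definition poisson_count :: "(nat \<Rightarrow> real) \<Rightarrow> real \<Rightarrow> nat" where
  "poisson_count E t = card {k. 1 \<le> k \<and> arrival E k \<le> t}"

definition X_proc :: "nat \<times> nat \<Rightarrow> (nat \<Rightarrow> real) \<times> (nat \<Rightarrow> real) \<Rightarrow> real \<Rightarrow> nat" where
  "X_proc s0 \<omega> t = fst (jump_chain s0 (snd \<omega>) (poisson_count (fst \<omega>) t))"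

definition Y_proc :: "nat \<times> nat \<Rightarrow> (nat \<Rightarrow> real) \<times> (nat \<Rightarrow> real) \<Rightarrow> real \<Rightarrow> nat" where
  "Y_proc s0 \<omega> t = snd (jump_chain s0 (snd \<omega>) (poisson_count (fst \<omega>) t))"

definition x_scaled :: "nat \<Rightarrow> nat \<times> nat \<Rightarrow> (nat \<Rightarrow> real) \<times> (nat \<Rightarrow> real) \<Rightarrow> real \<Rightarrow> real" where
  "x_scaled N s0 \<omega> t = real (X_proc s0 \<omega> (real N * t)) / real N"

definition y_scaled :: "nat \<Rightarrow> nat \<times> nat \<Rightarrow> (nat \<Rightarrow> real) \<times> (nat \<Rightarrow> real) \<Rightarrow> real \<Rightarrow> real" where
  "y_scaled N s0 \<omega> t = real (Y_proc s0 \<omega> (real N * t)) / real N"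

definition ruin_time :: "nat \<Rightarrow> nat \<times> nat \<Rightarrow> (nat \<Rightarrow> real) \<times> (nat \<Rightarrow> real) \<Rightarrow> real" where
  "ruin_time N s0 \<omega> = Inf {t. t > 0 \<and> min (x_scaled N s0 \<omega> t) (y_scaled N s0 \<omega> t) = 0}"

end

theory Submission
  imports Defs
begin

text \<open>Along the embedded jump chain the quantity \<open>(X\<^sup>2 - Y\<^sup>2)\<^sup>2\<close> grows in expectation by at
  most \<open>(2S)\<^sup>2\<close> per jump, where \<open>S = X\<^sub>0 + Y\<^sub>0\<close>; at absorption it equals \<open>R\<^sup>4\<close>, with \<open>R\<close> the total
  wealth left. As \<open>x\<^sub>0 = y\<^sub>0\<close>, Markov's inequality gives \<open>R = o(N)\<close> with high probability, so the
  number \<open>K = S - R\<close> of jumps up to ruin is \<open>S + o(N)\<close>. The ruin time is the \<open>K\<close>-th arrival of the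
  Poisson clock divided by \<open>N\<close>; since arrivals increase, it lies between the \<open>(S - \<lfloor>dN\<rfloor>)\<close>-th
  and the \<open>S\<close>-th arrival, and both concentrate around their index by Chebyshev's inequality.\<close>

lemma nn_integral_PiM_split_last:
  fixes M :: "nat \<Rightarrow> 'a measure"
  assumes "\<And>i. prob_space (M i)"
    and h[measurable]: "h \<in> borel_measurable (PiM {..<n} M \<Otimes>\<^sub>M M n)"
  shows "(\<integral>\<^sup>+x. h (restrict x {..<n}, x n) \<partial>PiM UNIV M) =
         (\<integral>\<^sup>+x. (\<integral>\<^sup>+y. h (restrict x {..<n}, y) \<partial>M n) \<partial>PiM UNIV M)"
proof -
  interpret product_prob_space M UNIV
    using assms by (simp add: product_prob_space_def product_sigma_finite_def
        prob_space_imp_sigma_finite product_prob_space_axioms_def)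
  interpret Mn: prob_space "M n" using assms by auto
  define f where "f z = h (restrict z {..<n}, z n)" for z
  have [measurable]: "f \<in> borel_measurable (PiM (insert n {..<n}) M)"
    unfolding f_def by measurable
  have "(\<integral>\<^sup>+x. h (restrict x {..<n}, x n) \<partial>PiM UNIV M) =
      (\<integral>\<^sup>+x. f (restrict x (insert n {..<n})) \<partial>PiM UNIV M)"
    by (simp add: f_def)
  also have "\<dots> = (\<integral>\<^sup>+z. f z \<partial>distr (PiM UNIV M) (PiM (insert n {..<n}) M) (\<lambda>x. restrict x (insert n {..<n})))"
    by (intro nn_integral_distr[symmetric] measurable_restrict_subset) auto
  also have "\<dots> = (\<integral>\<^sup>+z. f z \<partial>PiM (insert n {..<n}) M)"
    by (subst distr_PiM_restrict_finite) auto
  also have "\<dots> = (\<integral>\<^sup>+z. (\<integral>\<^sup>+y. f (z(n:=y)) \<partial>M n) \<partial>PiM {..<n} M)"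
    by (rule product_nn_integral_insert) auto
  also have "\<dots> = (\<integral>\<^sup>+z. (\<integral>\<^sup>+y. h (z, y) \<partial>M n) \<partial>PiM {..<n} M)"
  proof (rule nn_integral_cong)
    fix z assume "z \<in> space (PiM {..<n} M)"
    then have "restrict (z(n := y)) {..<n} = z" for y
      by (auto simp: space_PiM PiE_def extensional_def restrict_def fun_eq_iff)
    then show "(\<integral>\<^sup>+y. f (z(n:=y)) \<partial>M n) = (\<integral>\<^sup>+y. h (z, y) \<partial>M n)"
      by (simp add: f_def)
  qed
  also have "\<dots> = (\<integral>\<^sup>+z. (\<integral>\<^sup>+y. h (z, y) \<partial>M n) \<partial>distr (PiM UNIV M) (PiM {..<n} M) (\<lambda>x. restrict x {..<n}))"
    by (subst distr_PiM_restrict_finite) auto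
  also have "\<dots> = (\<integral>\<^sup>+x. (\<integral>\<^sup>+y. h (restrict x {..<n}, y) \<partial>M n) \<partial>PiM UNIV M)"
    by (intro nn_integral_distr measurable_restrict_subset M.borel_measurable_nn_integral_fst h) auto
  finally show ?thesis .
qed

lemma nn_integral_pair_fst:
  assumes "prob_space M2" and [measurable]: "g \<in> borel_measurable M1"
  shows "(\<integral>\<^sup>+\<omega>. g (fst \<omega>) \<partial>(M1 \<Otimes>\<^sub>M M2)) = (\<integral>\<^sup>+x. g x \<partial>M1)"
proof -
  interpret M2: prob_space M2 by fact
  have "(\<integral>\<^sup>+\<omega>. g (fst \<omega>) \<partial>(M1 \<Otimes>\<^sub>M M2)) = (\<integral>\<^sup>+x. \<integral>\<^sup>+y. g x \<partial>M2 \<partial>M1)"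
    using M2.nn_integral_fst[of "\<lambda>\<omega>. g (fst \<omega>)" M1] by simp
  then show ?thesis by (simp add: M2.emeasure_space_1)
qed

lemma nn_integral_pair_snd:
  assumes "prob_space M1" "prob_space M2" and [measurable]: "g \<in> borel_measurable M2"
  shows "(\<integral>\<^sup>+\<omega>. g (snd \<omega>) \<partial>(M1 \<Otimes>\<^sub>M M2)) = (\<integral>\<^sup>+y. g y \<partial>M2)"
proof -
  interpret pair_prob_space M1 M2 using assms by (simp add: pair_prob_space_def pair_sigma_finite_def
        prob_space_imp_sigma_finite)
  have "(\<integral>\<^sup>+\<omega>. g (snd \<omega>) \<partial>(M1 \<Otimes>\<^sub>M M2)) = (\<integral>\<^sup>+y. \<integral>\<^sup>+x. g y \<partial>M1 \<partial>M2)"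
    using nn_integral_snd[of "\<lambda>\<omega>. g (snd \<omega>)"] by simp
  then show ?thesis by (simp add: M1.emeasure_space_1)
qed

lemma (in prob_space) Markov_inequality_nn_integral:
  fixes g :: "'a \<Rightarrow> real"
  assumes [measurable]: "g \<in> borel_measurable M" and "\<And>x. 0 \<le> g x"
    and "(\<integral>\<^sup>+x. g x \<partial>M) \<le> ennreal B" and "0 \<le> B" and "a > 0"
  shows "prob {x\<in>space M. a \<le> g x} \<le> B / a"
proof -
  have "{x\<in>space M. a \<le> g x} = {x\<in>space M. 1 \<le> ennreal (1/a) * g x}"
    using assms(2,5) by (auto simp: ennreal_mult[symmetric] field_simps ennreal_1[symmetric]
        simp del: ennreal_1)
  then have "emeasure M {x\<in>space M. a \<le> g x} \<le> ennreal (1/a) * (\<integral>\<^sup>+x. g x \<partial>M)"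
    using nn_integral_Markov_inequality[where u="\<lambda>x. ennreal (g x)" and A="space M" and c="1/a" and M=M]
    by simp
  also have "ennreal (1/a) * (\<integral>\<^sup>+x. g x \<partial>M) \<le> ennreal (1/a) * ennreal B"
    using assms(3) by (rule mult_left_mono) simp
  also have "\<dots> = ennreal (B / a)"
    using assms(4,5) by (simp add: ennreal_mult[symmetric])
  finally show ?thesis
    using assms(4,5) by (simp add: emeasure_eq_measure)
qed

lemma measurable_component_borel:
  assumes "i \<in> I" and "sets M = sets borel"
  shows "(\<lambda>x. x i) \<in> borel_measurable (PiM I (\<lambda>_. M))"
  using measurable_component_singleton[OF assms(1), of "\<lambda>_. M"]
    measurable_cong_sets[OF refl assms(2)] by blast

lemma pred_card_Collect_less:
  fixes P :: "'a \<Rightarrow> nat \<Rightarrow> bool"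
  assumes "\<And>k. Measurable.pred M (\<lambda>\<omega>. P \<omega> k)"
  shows "Measurable.pred M (\<lambda>\<omega>. card {k. k < m \<and> P \<omega> k} = n)"
proof (induction m arbitrary: n)
  case 0
  then show ?case by (cases n) auto
next
  case (Suc m)
  have "card {k. k < Suc m \<and> P \<omega> k} = card {k. k < m \<and> P \<omega> k} + (if P \<omega> m then 1 else 0)" for \<omega>
  proof -
    have "{k. k < Suc m \<and> P \<omega> k} = {k. k < m \<and> P \<omega> k} \<union> (if P \<omega> m then {m} else {})"
      by (auto simp: less_Suc_eq)
    then show ?thesis by (auto simp: card_insert_if)
  qed
  then have "(\<lambda>\<omega>. card {k. k < Suc m \<and> P \<omega> k} = n) = (\<lambda>\<omega>.
      (P \<omega> m \<and> n \<noteq> 0 \<and> card {k. k < m \<and> P \<omega> k} = n - 1) \<or>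
      (\<not> P \<omega> m \<and> card {k. k < m \<and> P \<omega> k} = n))"
    by auto
  moreover note [measurable] = Suc assms
  ultimately show ?case by measurable
qed

lemma pred_card_Collect:
  fixes P :: "'a \<Rightarrow> nat \<Rightarrow> bool"
  assumes [measurable]: "\<And>k. Measurable.pred M (\<lambda>\<omega>. P \<omega> k)"
  shows "Measurable.pred M (\<lambda>\<omega>. card {k. P \<omega> k} = n)"
proof -
  have "card {k. P \<omega> k} = n \<longleftrightarrow>
     (\<exists>m. (\<forall>k. m \<le> k \<longrightarrow> \<not> P \<omega> k) \<and> card {k. k < m \<and> P \<omega> k} = n)
     \<or> (n = 0 \<and> (\<forall>m. \<exists>k. m \<le> k \<and> P \<omega> k))" for \<omega>
  proof (cases "finite {k. P \<omega> k}")
    case True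
    then obtain m where m: "\<forall>k\<ge>m. \<not> P \<omega> k"
      by (metis finite_nat_set_iff_bounded_le mem_Collect_eq not_less_eq_eq)
    have "{k. k < m' \<and> P \<omega> k} = {k. P \<omega> k}" if "\<forall>k. m' \<le> k \<longrightarrow> \<not> P \<omega> k" for m'
      using that by (auto simp: not_le[symmetric])
    with m show ?thesis by metis
  next
    case False
    then have "\<not> (\<forall>k\<ge>m. \<not> P \<omega> k)" for m
      using finite_subset[of "{k. P \<omega> k}" "{..<m}"] by (metis finite_lessThan leI lessThan_iff mem_Collect_eq subsetI)
    with False show ?thesis by auto
  qed
  moreover have [measurable]: "Measurable.pred M (\<lambda>\<omega>. card {k. k < m \<and> P \<omega> k} = n')" for m n'
    by (rule pred_card_Collect_less) measurable
  ultimately show ?thesis by (simp only:) measurable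
qed

lemma ex_count_step_iff:
  fixes a :: "nat \<Rightarrow> real" and Z :: "nat \<Rightarrow> bool" and r c :: real
  assumes "r > 0" and Z_Suc: "\<And>n. Z n \<Longrightarrow> Z (Suc n)"
  shows "(\<exists>t. 0 < t \<and> t < c \<and> Z (card {k. 1 \<le> k \<and> a k \<le> r * t})) \<longleftrightarrow>
    (\<exists>q::rat. 0 < real_of_rat q \<and> real_of_rat q < c \<and> Z (card {k. 1 \<le> k \<and> a k \<le> r * real_of_rat q})) \<or>
    (\<exists>j. 0 < a j / r \<and> a j / r < c \<and> Z (card {k. 1 \<le> k \<and> a k \<le> r * (a j / r)}))"
    (is "?L \<longleftrightarrow> ?R1 \<or> ?R2")
proof
  assume ?L
  then obtain t where t: "0 < t" "t < c" and Zt: "Z (card {k. 1 \<le> k \<and> a k \<le> r * t})" by blast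
  define A where "A = {k. 1 \<le> k \<and> a k \<le> r * t}"
  have rat_between: "\<exists>q::rat. x < real_of_rat q \<and> real_of_rat q < y" if "x < y" for x y
    using Rats_dense_in_real[OF that] by (metis Rats_cases)
  show "?R1 \<or> ?R2"
  proof (cases "Z 0")
    case True
    then have "Z n" for n by (induction n) (auto intro: Z_Suc)
    with rat_between[of 0 c] t show ?thesis by auto
  next
    case False
    \<comment> \<open>\<open>card\<close> is then nonzero, so \<open>A\<close> is finite and its count stays constant slightly below \<open>t\<close>
      unless \<open>r * t\<close> is itself one of the values \<open>a k\<close>.\<close>
    have "finite A"
      using Zt False by (metis A_def card.infinite)
    show ?thesis
    proof (cases "\<exists>k\<in>A. a k = r * t")
      case True
      then obtain j where "a j = r * t" by blast
      then have "a j / r = t" using \<open>r > 0\<close> by simp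
      with t Zt show ?thesis by (intro disjI2 exI[of _ j]) simp
    next
      case False
      define m where "m = Max (insert 0 (a ` A))"
      have m0: "0 \<le> m" and mA: "\<And>k. k \<in> A \<Longrightarrow> a k \<le> m"
        using \<open>finite A\<close> by (auto simp: m_def)
      have "m \<in> insert 0 (a ` A)" unfolding m_def using \<open>finite A\<close> by (intro Max_in) auto
      then have "m < r * t" using False \<open>r > 0\<close> t(1) A_def by auto
      then obtain q :: rat where q: "m / r < real_of_rat q" "real_of_rat q < t"
        using rat_between[of "m/r" t] \<open>r > 0\<close> by (auto simp: field_simps)
      then have rq: "m < r * real_of_rat q" "r * real_of_rat q < r * t"
        using \<open>r > 0\<close> by (auto simp: field_simps)
      have "{k. 1 \<le> k \<and> a k \<le> r * real_of_rat q} = A"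
        unfolding A_def using rq mA A_def by force
      moreover have "0 < real_of_rat q"
        using q m0 \<open>r > 0\<close> by (smt (verit) divide_nonneg_pos)
      ultimately show ?thesis
        using t q Zt unfolding A_def by (intro disjI1) (metis order.strict_trans)
    qed
  qed
qed blast

abbreviation "Exp1 \<equiv> density lborel (exponential_density 1)"
abbreviation "Unif01 \<equiv> uniform_measure lborel {0..1::real}"
abbreviation "Exp1_seq \<equiv> PiM (UNIV::nat set) (\<lambda>_. Exp1)"
abbreviation "Unif01_seq \<equiv> PiM (UNIV::nat set) (\<lambda>_. Unif01)"

lemma prob_space_Exp1: "prob_space Exp1"
  by (rule prob_space_exponential_density) simp

lemma prob_space_Unif01: "prob_space Unif01"
  by (rule prob_space_uniform_measure) simp_all

lemma prob_space_Exp1_seq: "prob_space Exp1_seq"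
  by (rule prob_space_PiM) (rule prob_space_Exp1)

lemma prob_space_Unif01_seq: "prob_space Unif01_seq"
  by (rule prob_space_PiM) (rule prob_space_Unif01)

lemma prob_space_game_space: "prob_space game_space"
  unfolding game_space_def by (intro prob_space_pair prob_space_Exp1_seq prob_space_Unif01_seq)

lemma emeasure_Unif01_lessThan:
  assumes "0 \<le> q" "q \<le> 1"
  shows "emeasure Unif01 {..<q} = ennreal q"
proof -
  have "{0..1} \<inter> {..<q} = {0..<q}" using assms by auto
  then show ?thesis
    using assms by (simp add: emeasure_uniform_measure divide_ennreal_def)
qed

lemma emeasure_Unif01_atLeast:
  assumes "0 \<le> q" "q \<le> 1"
  shows "emeasure Unif01 {q..} = ennreal (1 - q)"
proof -
  have "{0..1} \<inter> {q..} = {q..1}" using assms by auto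
  then show ?thesis
    using assms by (simp add: emeasure_uniform_measure divide_ennreal_def)
qed

lemma nn_integral_Exp1_shifted_square:
  "(\<integral>\<^sup>+y. ennreal ((A + (y - 1))^2) \<partial>Exp1) = ennreal (A^2 + 1)"
proof -
  have D: "distributed Exp1 lborel (\<lambda>x. x) (exponential_density 1)"
    unfolding distributed_def
    by (auto intro: distr_id2 measurable_ident_sets simp: exponential_density_def)
  have moment: "has_bochner_integral Exp1 (\<lambda>x. x ^ i) (fact i)" for i
    using prob_space.has_bochner_integral_erlang_ith_moment[OF prob_space_Exp1 _ D, of i] by simp
  have "has_bochner_integral Exp1 (\<lambda>y. (A-1)^2 * y^0 + (2*(A-1)) * y^1 + y^2)
      ((A-1)^2 * fact 0 + (2*(A-1)) * fact 1 + fact 2)"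
    by (intro has_bochner_integral_add has_bochner_integral_mult_right moment)
  moreover have "(\<lambda>y. (A-1)^2 * y^0 + (2*(A-1)) * y^1 + y^2) = (\<lambda>y. (A + (y - 1))^2)"
    by (rule ext) (simp add: power2_eq_square algebra_simps)
  moreover have "(A-1)^2 * fact 0 + (2*(A-1)) * fact 1 + fact 2 = A^2 + (1::real)"
    by (simp add: power2_eq_square algebra_simps numeral_2_eq_2)
  ultimately have "has_bochner_integral Exp1 (\<lambda>y. (A + (y - 1))^2) (A^2 + 1)"
    by simp
  then show ?thesis
    by (subst nn_integral_eq_integral) (auto intro: integrable.intros simp: has_bochner_integral_integral_eq)
qed

lemma AE_Exp1_pos: "AE x in Exp1. 0 < x"
proof -
  have "AE x in lborel. x \<noteq> (0::real)"
    by (rule AE_lborel_singleton)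
  then show ?thesis
    by (subst AE_density) (auto elim!: eventually_mono simp: exponential_density_def)
qed

lemma AE_game_space_interarrivals_pos: "AE \<omega> in game_space. \<forall>i. 0 < fst \<omega> i"
proof -
  interpret pair_prob_space Exp1_seq Unif01_seq
    by (simp add: pair_prob_space_def pair_sigma_finite_def prob_space_imp_sigma_finite
        prob_space_Exp1_seq prob_space_Unif01_seq)
  have "AE E in Exp1_seq. \<forall>i. 0 < E i"
    by (intro AE_all_countable[THEN iffD2] allI AE_PiM_component prob_space_Exp1 AE_Exp1_pos) auto
  then show ?thesis
    unfolding game_space_def
    by (intro AE_pair_measure) (auto elim!: eventually_mono)
qed

lemma borel_measurable_game_space_fst [measurable]: "(\<lambda>\<omega>. fst \<omega> i) \<in> borel_measurable game_space"
  unfolding game_space_def by measurable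

lemma borel_measurable_arrival [measurable]: "(\<lambda>\<omega>. arrival (fst \<omega>) k) \<in> borel_measurable game_space"
  unfolding arrival_def by measurable

lemma measurable_game_step:
  assumes [measurable]: "f \<in> borel_measurable M"
  shows "(\<lambda>x. game_step (f x) s) \<in> measurable M (count_space UNIV)"
  unfolding game_step_def by (cases s) measurable

lemma measurable_jump_chain:
  assumes "\<And>i. i < n \<Longrightarrow> (\<lambda>U. U i) \<in> borel_measurable M"
  shows "(\<lambda>U. jump_chain s0 U n) \<in> measurable M (count_space UNIV)"
  using assms
proof (induction n)
  case (Suc n)
  have "(\<lambda>U. (\<lambda>s U. game_step (U n) s) (jump_chain s0 U n) U) \<in> measurable M (count_space UNIV)"
    using Suc by (intro measurable_compose_countable[OF measurable_game_step]) auto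
  then show ?case by simp
qed simp

lemma measurable_game_space_jump_chain [measurable]:
  "(\<lambda>\<omega>. jump_chain s0 (snd \<omega>) n) \<in> measurable game_space (count_space UNIV)"
  unfolding game_space_def
  by (intro measurable_compose[OF measurable_snd] measurable_jump_chain measurable_component_borel) simp_all

section \<open>The jump chain\<close>

definition absorbed :: "nat \<times> nat \<Rightarrow> (nat \<Rightarrow> real) \<Rightarrow> nat \<Rightarrow> bool" where
  "absorbed s0 U n \<longleftrightarrow> fst (jump_chain s0 U n) = 0 \<or> snd (jump_chain s0 U n) = 0"

lemma absorbed_Suc: "absorbed s0 U n \<Longrightarrow> absorbed s0 U (Suc n)"
  by (cases "jump_chain s0 U n") (auto simp: absorbed_def game_step_def)

lemma absorbed_mono: "absorbed s0 U n \<Longrightarrow> n \<le> m \<Longrightarrow> absorbed s0 U m"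
  by (induction m) (auto simp: le_Suc_eq intro: absorbed_Suc)

lemma jump_chain_absorbed:
  assumes "absorbed s0 U k" "k \<le> m"
  shows "jump_chain s0 U m = jump_chain s0 U k"
  using assms(2)
proof (induction m)
  case (Suc m)
  show ?case
  proof (cases "k = Suc m")
    case False
    with Suc.prems have "k \<le> m" by simp
    then have "absorbed s0 U m" using assms(1) absorbed_mono by blast
    then have "jump_chain s0 U (Suc m) = jump_chain s0 U m"
      by (cases "jump_chain s0 U m") (auto simp: absorbed_def game_step_def)
    with Suc.IH \<open>k \<le> m\<close> show ?thesis by simp
  qed simp
qed simp

lemma jump_chain_total_not_absorbed:
  "\<not> absorbed s0 U k \<Longrightarrow> fst (jump_chain s0 U k) + snd (jump_chain s0 U k) + k = fst s0 + snd s0"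
proof (induction k)
  case (Suc k)
  then have "\<not> absorbed s0 U k" using absorbed_Suc by blast
  with Suc.IH show ?case
    by (cases "jump_chain s0 U k") (auto simp: absorbed_def game_step_def)
qed simp

lemma absorbed_total: "absorbed s0 U (fst s0 + snd s0)"
  using jump_chain_total_not_absorbed[of s0 U "fst s0 + snd s0"]
  by (cases "jump_chain s0 U (fst s0 + snd s0)") (fastforce simp: absorbed_def)

lemma jump_chain_bounded: "fst (jump_chain s0 U k) \<le> fst s0 \<and> snd (jump_chain s0 U k) \<le> snd s0"
  by (induction k) (auto simp: game_step_def split: prod.splits)

lemma jump_chain_cong: "(\<And>i. i < k \<Longrightarrow> U i = V i) \<Longrightarrow> jump_chain s0 U k = jump_chain s0 V k"
  by (induction k) auto

definition absorption_step :: "nat \<times> nat \<Rightarrow> (nat \<Rightarrow> real) \<Rightarrow> nat" where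
  "absorption_step s0 U = (LEAST n. absorbed s0 U n)"

lemma absorbed_iff_absorption_step_le: "absorbed s0 U n \<longleftrightarrow> absorption_step s0 U \<le> n"
  unfolding absorption_step_def
  by (metis LeastI Least_le absorbed_mono absorbed_total)

lemma absorption_step_le_total: "absorption_step s0 U \<le> fst s0 + snd s0"
  using absorbed_iff_absorption_step_le absorbed_total by blast

lemma absorption_step_pos: "0 < fst s0 \<Longrightarrow> 0 < snd s0 \<Longrightarrow> 0 < absorption_step s0 U"
  using absorbed_iff_absorption_step_le[of s0 U 0] by (auto simp: absorbed_def)

lemma jump_chain_total_absorbed:
  assumes "0 < fst s0" "0 < snd s0"
  defines "S \<equiv> fst s0 + snd s0"
  shows "fst (jump_chain s0 U S) + snd (jump_chain s0 U S) + absorption_step s0 U = S"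
proof -
  obtain k where k: "absorption_step s0 U = Suc k"
    using absorption_step_pos[OF assms(1,2)] gr0_implies_Suc by blast
  then have "\<not> absorbed s0 U k"
    using absorbed_iff_absorption_step_le by simp
  moreover have "jump_chain s0 U S = jump_chain s0 U (Suc k)"
    using jump_chain_absorbed absorbed_iff_absorption_step_le absorption_step_le_total k
    unfolding S_def by (metis order_refl)
  moreover have "fst (jump_chain s0 U (Suc k)) + snd (jump_chain s0 U (Suc k)) + 1 =
      fst (jump_chain s0 U k) + snd (jump_chain s0 U k)"
    using \<open>\<not> absorbed s0 U k\<close>
    by (cases "jump_chain s0 U k") (auto simp: absorbed_def game_step_def)
  ultimately show ?thesis
    using jump_chain_total_not_absorbed[of s0 U k] k unfolding S_def by simp
qed

lemma ruin_time_set_eq: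
  assumes "N > 0"
  shows "{t. t > 0 \<and> min (x_scaled N s0 \<omega> t) (y_scaled N s0 \<omega> t) = 0} =
         {t. t > 0 \<and> absorbed s0 (snd \<omega>) (card {k. 1 \<le> k \<and> arrival (fst \<omega>) k \<le> real N * t})}"
proof -
  have "min (real a / real N) (real b / real N) = 0 \<longleftrightarrow> a = 0 \<or> b = 0" for a b :: nat
    using assms by (auto simp: min_def field_simps)
  then show ?thesis
    by (simp add: x_scaled_def y_scaled_def X_proc_def Y_proc_def poisson_count_def absorbed_def)
qed

lemma ruin_time_eq_arrival:
  assumes "N > 0" "0 < fst s0" "0 < snd s0" and E: "\<forall>i. 0 < fst \<omega> i"
  shows "ruin_time N s0 \<omega> = arrival (fst \<omega>) (absorption_step s0 (snd \<omega>)) / real N"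
proof -
  let ?a = "arrival (fst \<omega>)" and ?K = "absorption_step s0 (snd \<omega>)"
  have a_mono: "strict_mono ?a"
    using E by (intro strict_monoI_Suc) (simp add: arrival_def)
  then have a_le_iff: "?a i \<le> ?a j \<longleftrightarrow> i \<le> j" for i j
    by (simp add: strict_mono_less_eq)
  let ?T = "{t. t > 0 \<and> absorbed s0 (snd \<omega>) (card {k. 1 \<le> k \<and> ?a k \<le> real N * t})}"
  have count: "card {k. 1 \<le> k \<and> ?a k \<le> real N * t} < ?K" if "real N * t < ?a ?K" for t
  proof -
    have "{k. 1 \<le> k \<and> ?a k \<le> real N * t} \<subseteq> {1..<?K}"
    proof
      fix k assume "k \<in> {k. 1 \<le> k \<and> ?a k \<le> real N * t}"
      then have "1 \<le> k" "?a k < ?a ?K" using that by auto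
      then show "k \<in> {1..<?K}" using strict_mono_less[OF a_mono] by simp
    qed
    from card_mono[OF _ this] have "card {k. 1 \<le> k \<and> ?a k \<le> real N * t} \<le> ?K - 1"
      by simp
    then show ?thesis
      using absorption_step_pos[OF assms(2,3), of "snd \<omega>"] by linarith
  qed
  have "Inf ?T = ?a ?K / real N"
  proof (rule cInf_eq_minimum)
    have "?a 0 < ?a ?K"
      using strict_mono_less[OF a_mono] absorption_step_pos[OF assms(2,3)] by simp
    moreover have "{k. 1 \<le> k \<and> ?a k \<le> real N * (?a ?K / real N)} = {1..?K}"
      using \<open>N > 0\<close> by (auto simp: a_le_iff)
    ultimately show "?a ?K / real N \<in> ?T"
      using \<open>N > 0\<close> absorbed_iff_absorption_step_le by (simp add: arrival_def)
  next
    fix t assume "t \<in> ?T"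
    then have "?K \<le> card {k. 1 \<le> k \<and> ?a k \<le> real N * t}"
      using absorbed_iff_absorption_step_le by simp
    then have "?a ?K \<le> real N * t"
      using count[of t] by (metis leD not_le)
    then show "?a ?K / real N \<le> t"
      using \<open>N > 0\<close> by (simp add: divide_le_eq mult.commute)
  qed
  then show ?thesis
    unfolding ruin_time_def ruin_time_set_eq[OF \<open>N > 0\<close>] .
qed

lemma pred_absorbed_count:
  assumes [measurable]: "f \<in> borel_measurable game_space"
  shows "Measurable.pred game_space
    (\<lambda>\<omega>. absorbed s0 (snd \<omega>) (card {k. 1 \<le> k \<and> arrival (fst \<omega>) k \<le> f \<omega>}))"
proof -
  have [measurable]: "Measurable.pred game_space
      (\<lambda>\<omega>. card {k. 1 \<le> k \<and> arrival (fst \<omega>) k \<le> f \<omega>} = n)" for n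
    by (rule pred_card_Collect) measurable
  have [measurable]: "Measurable.pred game_space (\<lambda>\<omega>. absorbed s0 (snd \<omega>) n)" for n
    unfolding absorbed_def by measurable
  have "(\<lambda>\<omega>. absorbed s0 (snd \<omega>) (card {k. 1 \<le> k \<and> arrival (fst \<omega>) k \<le> f \<omega>})) =
      (\<lambda>\<omega>. \<exists>n. card {k. 1 \<le> k \<and> arrival (fst \<omega>) k \<le> f \<omega>} = n \<and> absorbed s0 (snd \<omega>) n)"
    by auto
  then show ?thesis by simp
qed

lemma pred_ex_absorbed_before:
  assumes "r > 0"
  shows "Measurable.pred game_space (\<lambda>\<omega>. \<exists>t. 0 < t \<and> t < c \<and>
    absorbed s0 (snd \<omega>) (card {k. 1 \<le> k \<and> arrival (fst \<omega>) k \<le> r * t}))"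
proof -
  have [measurable]: "Measurable.pred game_space (\<lambda>\<omega>.
      absorbed s0 (snd \<omega>) (card {k. 1 \<le> k \<and> arrival (fst \<omega>) k \<le> r * real_of_rat q}))" for q
    by (rule pred_absorbed_count) simp
  have [measurable]: "Measurable.pred game_space (\<lambda>\<omega>.
      absorbed s0 (snd \<omega>) (card {k. 1 \<le> k \<and> arrival (fst \<omega>) k \<le> r * (arrival (fst \<omega>) j / r)}))" for j
    by (rule pred_absorbed_count) measurable
  have "(\<exists>t. 0 < t \<and> t < c \<and> absorbed s0 (snd \<omega>) (card {k. 1 \<le> k \<and> arrival (fst \<omega>) k \<le> r * t}))
    \<longleftrightarrow> (\<exists>q::rat. 0 < real_of_rat q \<and> real_of_rat q < c \<and>
        absorbed s0 (snd \<omega>) (card {k. 1 \<le> k \<and> arrival (fst \<omega>) k \<le> r * real_of_rat q})) \<or>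
      (\<exists>j. 0 < arrival (fst \<omega>) j / r \<and> arrival (fst \<omega>) j / r < c \<and>
        absorbed s0 (snd \<omega>) (card {k. 1 \<le> k \<and> arrival (fst \<omega>) k \<le> r * (arrival (fst \<omega>) j / r)}))"
    for \<omega>
    by (rule ex_count_step_iff[where Z="absorbed s0 (snd \<omega>)", OF assms absorbed_Suc])
  then show ?thesis by (simp only:) measurable
qed

lemma borel_measurable_ruin_time: "ruin_time N s0 \<in> borel_measurable game_space"
proof (cases "N = 0")
  case True
  then have "ruin_time N s0 = (\<lambda>_. Inf {t::real. t > 0})"
    by (simp add: ruin_time_def x_scaled_def y_scaled_def fun_eq_iff)
  then show ?thesis by simp
next
  case False
  define P where "P \<omega> t \<longleftrightarrow> absorbed s0 (snd \<omega>) (card {k. 1 \<le> k \<and> arrival (fst \<omega>) k \<le> real N * t})"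
    for \<omega> t
  have [measurable]: "Measurable.pred game_space (\<lambda>\<omega>. \<exists>t. 0 < t \<and> t < c \<and> P \<omega> t)" for c
    unfolding P_def using False by (intro pred_ex_absorbed_before) simp
  \<comment> \<open>Without ruin the ruin time is the unspecified value \<open>Inf {}\<close>, hence the second disjunct.\<close>
  have Inf_ruin_less_iff: "Inf {t. t > 0 \<and> P \<omega> t} < c \<longleftrightarrow> (\<exists>t. 0 < t \<and> t < c \<and> P \<omega> t) \<or>
      ((\<forall>n::nat. \<not> (\<exists>t. 0 < t \<and> t < real n \<and> P \<omega> t)) \<and> Inf ({}::real set) < c)" for \<omega> c
  proof (cases "{t. t > 0 \<and> P \<omega> t} = {}")
    case False
    then obtain t n where "t > 0" "P \<omega> t" "t < real n"
      using reals_Archimedean2 by blast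
    then have "\<exists>n::nat. \<exists>t. 0 < t \<and> t < real n \<and> P \<omega> t" by blast
    moreover have "bdd_below {t. t > 0 \<and> P \<omega> t}"
      by (rule bdd_belowI[of _ 0]) auto
    then have "Inf {t. t > 0 \<and> P \<omega> t} < c \<longleftrightarrow> (\<exists>t. 0 < t \<and> t < c \<and> P \<omega> t)"
      using cInf_less_iff[OF False] by auto
    ultimately show ?thesis by blast
  next
    case True
    then have "\<forall>t. 0 < t \<longrightarrow> \<not> P \<omega> t" by auto
    then show ?thesis unfolding True by auto
  qed
  have ruin_eq: "ruin_time N s0 \<omega> = Inf {t. t > 0 \<and> P \<omega> t}" for \<omega>
    using ruin_time_set_eq[of N s0 \<omega>] False unfolding ruin_time_def P_def by simp
  have "Measurable.pred game_space (\<lambda>\<omega>. ruin_time N s0 \<omega> < c)" for c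
    unfolding ruin_eq Inf_ruin_less_iff by measurable
  then show ?thesis
    unfolding borel_measurable_iff_less pred_def by blast
qed

section \<open>Second moments\<close>

definition square_gap :: "nat \<times> nat \<Rightarrow> real" where
  "square_gap s = real (fst s)^2 - real (snd s)^2"

lemma square_gap_absorbed:
  "absorbed s0 U n \<Longrightarrow> (square_gap (jump_chain s0 U n))^2 =
    real (fst (jump_chain s0 U n) + snd (jump_chain s0 U n)) ^ 4"
  by (auto simp: absorbed_def square_gap_def power2_eq_square power4_eq_xxxx)

lemma square_gap_step_ineq:
  fixes a b C :: real
  assumes "1 \<le> a" "1 \<le> b" "(2*a - 1)^2 \<le> C" "(2*b - 1)^2 \<le> C"
  shows "(a^2 - (b-1)^2)^2 * (a/(a+b)) + ((a-1)^2 - b^2)^2 * (1 - a/(a+b)) \<le> (a^2 - b^2)^2 + C"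
proof -
  have ab: "a + b > 0" using assms by simp
  have "a * (a^2 - (b-1)^2)^2 + b * ((a-1)^2 - b^2)^2 =
      (a+b) * (a^2 - b^2)^2 - 2*(a+b)*(a-b)^2 + a*(2*b-1)^2 + b*(2*a-1)^2"
    by (simp add: power2_eq_square algebra_simps)
  also have "\<dots> \<le> (a+b) * ((a^2 - b^2)^2 + C)"
  proof -
    have "a*(2*b-1)^2 + b*(2*a-1)^2 \<le> a*C + b*C"
      using assms by (intro add_mono mult_left_mono) auto
    moreover have "0 \<le> 2*(a+b)*(a-b)^2" using ab by simp
    ultimately show ?thesis by (simp add: algebra_simps)
  qed
  moreover have "1 - a/(a+b) = b/(a+b)"
    using ab by (simp add: field_simps)
  then have "(a^2 - (b-1)^2)^2 * (a/(a+b)) + ((a-1)^2 - b^2)^2 * (1 - a/(a+b)) =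
      (a * (a^2 - (b-1)^2)^2 + b * ((a-1)^2 - b^2)^2) / (a+b)"
    by (simp add: add_divide_distrib mult.commute)
  ultimately show ?thesis
    using ab by (simp add: divide_le_eq mult.commute)
qed

lemma nn_integral_square_gap_game_step:
  assumes "fst s + snd s \<le> S"
  shows "(\<integral>\<^sup>+u. ennreal ((square_gap (game_step u s))^2) \<partial>Unif01) \<le>
    ennreal ((square_gap s)^2 + (2 * real S)^2)"
proof (cases "fst s = 0 \<or> snd s = 0")
  case True
  then have "game_step u s = s" for u by (cases s) (auto simp: game_step_def)
  then show ?thesis
    using prob_space.emeasure_space_1[OF prob_space_Unif01] by simp
next
  case False
  obtain a b where s: "s = (a, b)" by (cases s)
  with False have "a \<ge> 1" "b \<ge> 1" by auto
  define q where "q = real a / (real a + real b)"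
  have q: "0 \<le> q" "q \<le> 1" using \<open>a \<ge> 1\<close> by (auto simp: q_def field_simps)
  define m1 where "m1 = (square_gap (a, b - 1))^2"
  define m2 where "m2 = (square_gap (a - 1, b))^2"
  have "ennreal ((square_gap (game_step u s))^2) = ennreal m1 * indicator {..<q} u + ennreal m2 * indicator {q..} u" for u
    using \<open>a \<ge> 1\<close> \<open>b \<ge> 1\<close> by (auto simp: s game_step_def q_def m1_def m2_def indicator_def)
  then have "(\<integral>\<^sup>+u. ennreal ((square_gap (game_step u s))^2) \<partial>Unif01) =
      (\<integral>\<^sup>+u. ennreal m1 * indicator {..<q} u \<partial>Unif01) + (\<integral>\<^sup>+u. ennreal m2 * indicator {q..} u \<partial>Unif01)"
    by (simp only:) (rule nn_integral_add; simp)
  also have "\<dots> = ennreal m1 * ennreal q + ennreal m2 * ennreal (1 - q)"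
    by (subst nn_integral_cmult_indicator, simp)+ (simp only: emeasure_Unif01_lessThan[OF q] emeasure_Unif01_atLeast[OF q])
  also have "\<dots> = ennreal (m1 * q) + ennreal (m2 * (1 - q))"
    using q by (simp add: m1_def m2_def ennreal_mult)
  also have "\<dots> = ennreal (m1 * q + m2 * (1 - q))"
    using q by (intro ennreal_plus[symmetric]) (simp_all add: m1_def m2_def)
  also have "\<dots> \<le> ennreal ((square_gap s)^2 + (2 * real S)^2)"
  proof (rule ennreal_leI)
    have "a \<le> S" "b \<le> S" using assms s by auto
    then have "(2 * real a - 1)^2 \<le> (2 * real S)^2" "(2 * real b - 1)^2 \<le> (2 * real S)^2"
      using \<open>a \<ge> 1\<close> \<open>b \<ge> 1\<close> by (intro power_mono; simp)+
    from square_gap_step_ineq[of "real a" "real b", OF _ _ this]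
    show "m1 * q + m2 * (1 - q) \<le> (square_gap s)^2 + (2 * real S)^2"
      using \<open>a \<ge> 1\<close> \<open>b \<ge> 1\<close> by (simp add: q_def m1_def m2_def square_gap_def s of_nat_diff)
  qed
  finally show ?thesis .
qed

lemma measurable_jump_chain_Unif01:
  "{..<k} \<subseteq> I \<Longrightarrow> (\<lambda>U. jump_chain s0 U k) \<in> measurable (PiM I (\<lambda>_. Unif01)) (count_space UNIV)"
  by (intro measurable_jump_chain measurable_component_borel) auto

lemma borel_measurable_square_gap_next_step:
  "(\<lambda>p. ennreal ((square_gap (game_step (snd p) (jump_chain s0 (fst p) k)))^2))
    \<in> borel_measurable (PiM {..<k} (\<lambda>_. Unif01) \<Otimes>\<^sub>M Unif01)"
proof -
  have "(\<lambda>p. snd p) \<in> borel_measurable (PiM {..<k} (\<lambda>_. Unif01) \<Otimes>\<^sub>M Unif01)"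
    by measurable
  then have "(\<lambda>p. (\<lambda>s p. game_step (snd p) s) (jump_chain s0 (fst p) k) p) \<in>
      measurable (PiM {..<k} (\<lambda>_. Unif01) \<Otimes>\<^sub>M Unif01) (count_space UNIV)"
    by (intro measurable_compose_countable[OF measurable_game_step
        measurable_compose[OF measurable_fst measurable_jump_chain_Unif01]]) auto
  then show ?thesis
    by (rule measurable_compose[where g="\<lambda>s. ennreal ((square_gap s)^2)"]) simp
qed

lemma nn_integral_square_gap_jump_chain:
  "(\<integral>\<^sup>+U. ennreal ((square_gap (jump_chain s0 U k))^2) \<partial>Unif01_seq) \<le>
    ennreal ((square_gap s0)^2 + real k * (2 * real (fst s0 + snd s0))^2)"
proof (induction k)
  case 0
  show ?case
    using prob_space.emeasure_space_1[OF prob_space_Unif01_seq] by simp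
next
  case (Suc k)
  define C where "C = (2 * real (fst s0 + snd s0))^2"
  define h where "h p = ennreal ((square_gap (game_step (snd p) (jump_chain s0 (fst p) k)))^2)"
    for p :: "(nat \<Rightarrow> real) \<times> real"
  have "h \<in> borel_measurable (PiM {..<k} (\<lambda>_. Unif01) \<Otimes>\<^sub>M Unif01)"
    unfolding h_def by (rule borel_measurable_square_gap_next_step)
  have chain_restrict: "jump_chain s0 (restrict U {..<k}) k = jump_chain s0 U k" for U
    by (rule jump_chain_cong) simp
  have "(\<integral>\<^sup>+U. ennreal ((square_gap (jump_chain s0 U (Suc k)))^2) \<partial>Unif01_seq) =
      (\<integral>\<^sup>+U. h (restrict U {..<k}, U k) \<partial>Unif01_seq)"
    by (simp add: h_def chain_restrict)
  also have "\<dots> = (\<integral>\<^sup>+U. (\<integral>\<^sup>+u. h (restrict U {..<k}, u) \<partial>Unif01) \<partial>Unif01_seq)"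
    by (rule nn_integral_PiM_split_last[OF prob_space_Unif01]) fact
  also have "\<dots> \<le> (\<integral>\<^sup>+U. ennreal ((square_gap (jump_chain s0 U k))^2) + ennreal C \<partial>Unif01_seq)"
  proof (rule nn_integral_mono)
    fix U
    have "fst (jump_chain s0 U k) + snd (jump_chain s0 U k) \<le> fst s0 + snd s0"
      using jump_chain_bounded[of s0 U k] by simp
    from nn_integral_square_gap_game_step[OF this]
    show "(\<integral>\<^sup>+u. h (restrict U {..<k}, u) \<partial>Unif01) \<le>
        ennreal ((square_gap (jump_chain s0 U k))^2) + ennreal C"
      by (simp add: h_def chain_restrict C_def ennreal_plus)
  qed
  also have "\<dots> = (\<integral>\<^sup>+U. ennreal ((square_gap (jump_chain s0 U k))^2) \<partial>Unif01_seq) + ennreal C"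
  proof -
    have "(\<lambda>U. ennreal ((square_gap (jump_chain s0 U k))^2)) \<in> borel_measurable Unif01_seq"
      by (rule measurable_compose[OF measurable_jump_chain_Unif01[where I=UNIV]]) simp_all
    then show ?thesis
      using prob_space.emeasure_space_1[OF prob_space_Unif01_seq] by (simp add: nn_integral_add)
  qed
  also have "\<dots> \<le> ennreal ((square_gap s0)^2 + real k * C) + ennreal C"
    using Suc.IH unfolding C_def by (rule add_right_mono)
  also have "\<dots> = ennreal ((square_gap s0)^2 + real (Suc k) * C)"
    by (simp add: C_def ennreal_plus[symmetric] algebra_simps del: ennreal_plus)
  finally show ?case by (simp only: C_def)
qed

lemma nn_integral_arrival_deviation:
  "(\<integral>\<^sup>+E. ennreal ((arrival E n - real n)^2) \<partial>Exp1_seq) = ennreal (real n)"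
proof (induction n)
  case 0
  then show ?case by (simp add: arrival_def)
next
  case (Suc n)
  have arrival_meas: "(\<lambda>E. arrival E n) \<in> borel_measurable (PiM I (\<lambda>_. Exp1))" if "{..<n} \<subseteq> I" for I
    unfolding arrival_def using that
    by (intro borel_measurable_sum measurable_component_borel) auto
  define h where "h p = ennreal ((arrival (fst p) n - real n + (snd p - 1))^2)"
    for p :: "(nat \<Rightarrow> real) \<times> real"
  have "h \<in> borel_measurable (PiM {..<n} (\<lambda>_. Exp1) \<Otimes>\<^sub>M Exp1)"
    unfolding h_def using measurable_compose[OF measurable_fst arrival_meas[of "{..<n}"]] by measurable
  have arrival_restrict: "arrival (restrict E {..<n}) n = arrival E n" for E
    by (simp add: arrival_def)
  have "arrival E (Suc n) - real (Suc n) = arrival E n - real n + (E n - 1)" for E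
    by (simp add: arrival_def)
  then have "(\<integral>\<^sup>+E. ennreal ((arrival E (Suc n) - real (Suc n))^2) \<partial>Exp1_seq) =
      (\<integral>\<^sup>+E. h (restrict E {..<n}, E n) \<partial>Exp1_seq)"
    by (simp only: h_def arrival_restrict fst_conv snd_conv)
  also have "\<dots> = (\<integral>\<^sup>+E. (\<integral>\<^sup>+y. h (restrict E {..<n}, y) \<partial>Exp1) \<partial>Exp1_seq)"
    by (rule nn_integral_PiM_split_last[OF prob_space_Exp1]) fact
  also have "\<dots> = (\<integral>\<^sup>+E. ennreal ((arrival E n - real n)^2) + 1 \<partial>Exp1_seq)"
    by (simp add: h_def arrival_restrict nn_integral_Exp1_shifted_square ennreal_plus)
  also have "\<dots> = (\<integral>\<^sup>+E. ennreal ((arrival E n - real n)^2) \<partial>Exp1_seq) + 1"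
    using prob_space.emeasure_space_1[OF prob_space_Exp1_seq] arrival_meas[of UNIV]
    by (simp add: nn_integral_add)
  finally show ?case
    using Suc.IH by (simp add: ennreal_plus add.commute)
qed

lemma prob_square_gap_ge:
  assumes "a > 0"
  shows "measure game_space {\<omega>\<in>space game_space. a \<le> (square_gap (jump_chain s0 (snd \<omega>) k))^2}
    \<le> ((square_gap s0)^2 + real k * (2 * real (fst s0 + snd s0))^2) / a"
proof -
  interpret prob_space game_space by (rule prob_space_game_space)
  have "(\<integral>\<^sup>+\<omega>. ennreal ((square_gap (jump_chain s0 (snd \<omega>) k))^2) \<partial>game_space) =
      (\<integral>\<^sup>+U. ennreal ((square_gap (jump_chain s0 U k))^2) \<partial>Unif01_seq)"
    unfolding game_space_def using measurable_jump_chain_Unif01[where I=UNIV]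
    by (intro nn_integral_pair_snd prob_space_Exp1_seq prob_space_Unif01_seq) (auto intro: measurable_compose)
  with nn_integral_square_gap_jump_chain show ?thesis
    using assms by (intro Markov_inequality_nn_integral) simp_all
qed

lemma prob_arrival_deviation_ge:
  assumes "a > 0"
  shows "measure game_space {\<omega>\<in>space game_space. a \<le> \<bar>arrival (fst \<omega>) n - real n\<bar>} \<le> real n / a^2"
proof -
  interpret prob_space game_space by (rule prob_space_game_space)
  have "(\<lambda>E. arrival E n) \<in> borel_measurable Exp1_seq"
    unfolding arrival_def by (intro borel_measurable_sum measurable_component_borel) auto
  then have "(\<lambda>E. ennreal ((arrival E n - real n)^2)) \<in> borel_measurable Exp1_seq"
    by (intro measurable_compose[OF _ measurable_ennreal] borel_measurable_power borel_measurable_diff) simp_all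
  then have "(\<integral>\<^sup>+\<omega>. ennreal ((arrival (fst \<omega>) n - real n)^2) \<partial>game_space) = ennreal (real n)"
    unfolding game_space_def nn_integral_arrival_deviation[symmetric]
    by (intro nn_integral_pair_fst prob_space_Unif01_seq)
  moreover have "{\<omega>\<in>space game_space. a \<le> \<bar>arrival (fst \<omega>) n - real n\<bar>} =
      {\<omega>\<in>space game_space. a^2 \<le> (arrival (fst \<omega>) n - real n)^2}"
    using assms by (auto simp flip: abs_le_square_iff)
  ultimately show ?thesis
    using assms by (simp add: Markov_inequality_nn_integral)
qed

section \<open>Concentration of the ruin time\<close>

definition deviation_bound :: "nat \<times> nat \<Rightarrow> real \<Rightarrow> nat \<Rightarrow> real" where
  "deviation_bound s d N =
    ((square_gap s)^2 + real (fst s + snd s) * (2 * real (fst s + snd s))^2) / (d * real N)^4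
    + 2 * (real (fst s + snd s) / (d * real N)^2)"

lemma absorption_step_ge_of_square_gap:
  fixes s :: "nat \<times> nat" and x :: real
  defines "S \<equiv> fst s + snd s"
  assumes "0 < fst s" "0 < snd s" "x > 0" "(square_gap (jump_chain s U S))^2 < x^4"
  shows "S - nat \<lfloor>x\<rfloor> \<le> absorption_step s U"
proof -
  define R where "R = fst (jump_chain s U S) + snd (jump_chain s U S)"
  have "real R ^ 4 < x ^ 4"
    using assms(5) square_gap_absorbed[OF absorbed_total] unfolding R_def S_def by simp
  then have "real R < x"
    by (rule power_less_imp_less_base) (use \<open>x > 0\<close> in simp)
  then have "R \<le> nat \<lfloor>x\<rfloor>"
    by (simp add: le_nat_floor)
  moreover have "R + absorption_step s U = S"
    using jump_chain_total_absorbed[OF assms(2,3)] unfolding R_def S_def by simp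
  ultimately show ?thesis by linarith
qed

lemma of_nat_diff_nat_floor_ge:
  assumes "0 \<le> x"
  shows "real S - x \<le> real (S - nat \<lfloor>x\<rfloor>)"
proof (cases "nat \<lfloor>x\<rfloor> \<le> S")
  case True
  moreover have "real (nat \<lfloor>x\<rfloor>) \<le> x"
    using assms by linarith
  ultimately show ?thesis by (simp add: of_nat_diff)
next
  case False
  then show ?thesis using assms by linarith
qed

lemma ruin_time_close:
  fixes s :: "nat \<times> nat" and N :: nat and d T :: real
  defines "S \<equiv> fst s + snd s"
  defines "j \<equiv> S - nat \<lfloor>d * real N\<rfloor>"
  assumes "N > 0" "0 < fst s" "0 < snd s" "d > 0"
    and ST: "\<bar>real S / real N - T\<bar> < d"
    and E: "\<forall>i. 0 < fst \<omega> i"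
    and gap: "(square_gap (jump_chain s (snd \<omega>) S))^2 < (d * real N)^4"
    and arrival_S: "\<bar>arrival (fst \<omega>) S - real S\<bar> < d * real N"
    and arrival_j: "\<bar>arrival (fst \<omega>) j - real j\<bar> < d * real N"
  shows "\<bar>ruin_time N s \<omega> - T\<bar> < 3 * d"
proof -
  let ?a = "arrival (fst \<omega>)" and ?K = "absorption_step s (snd \<omega>)"
  have dN: "0 < d * real N" using assms by simp
  have "j \<le> ?K"
    using absorption_step_ge_of_square_gap[OF assms(4,5) dN] gap unfolding j_def S_def by simp
  moreover have "?K \<le> S"
    unfolding S_def by (rule absorption_step_le_total)
  moreover have "mono ?a"
    using E by (intro strict_mono_mono strict_monoI_Suc) (simp add: arrival_def)
  ultimately have "?a j \<le> ?a ?K" "?a ?K \<le> ?a S"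
    by (simp_all add: monoD)
  moreover have "real S - d * real N \<le> real j"
    unfolding j_def using dN by (intro of_nat_diff_nat_floor_ge) simp
  ultimately have "real S - 2 * (d * real N) < ?a ?K" "?a ?K < real S + d * real N"
    using arrival_S arrival_j by linarith+
  then have "(real S - 2 * (d * real N)) / real N < ?a ?K / real N"
      "?a ?K / real N < (real S + d * real N) / real N"
    using \<open>N > 0\<close> by (simp_all add: divide_strict_right_mono)
  moreover have "(real S - 2 * (d * real N)) / real N = real S / real N - 2 * d"
      "(real S + d * real N) / real N = real S / real N + d"
    using \<open>N > 0\<close> by (simp_all add: diff_divide_distrib add_divide_distrib)
  moreover have "ruin_time N s \<omega> = ?a ?K / real N"
    using ruin_time_eq_arrival[OF assms(3,4,5) E] .
  ultimately show ?thesis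
    using ST by linarith
qed

lemma prob_ruin_time_deviation_le:
  fixes s :: "nat \<times> nat" and N :: nat and d T :: real
  defines "S \<equiv> fst s + snd s"
  assumes "N > 0" "0 < fst s" "0 < snd s" "d > 0" "\<bar>real S / real N - T\<bar> < d"
  shows "measure game_space {\<omega>\<in>space game_space. 3 * d < \<bar>ruin_time N s \<omega> - T\<bar>} \<le>
    deviation_bound s d N"
proof -
  interpret prob_space game_space by (rule prob_space_game_space)
  define j where "j = S - nat \<lfloor>d * real N\<rfloor>"
  define B1 where "B1 = {\<omega>\<in>space game_space. (d * real N)^4 \<le> (square_gap (jump_chain s (snd \<omega>) S))^2}"
  define B2 where "B2 = {\<omega>\<in>space game_space. d * real N \<le> \<bar>arrival (fst \<omega>) S - real S\<bar>}"
  define B3 where "B3 = {\<omega>\<in>space game_space. d * real N \<le> \<bar>arrival (fst \<omega>) j - real j\<bar>}"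
  have dN: "0 < d * real N" using assms by simp
  have [measurable]: "B1 \<in> events" "B2 \<in> events" "B3 \<in> events"
    unfolding B1_def B2_def B3_def by measurable
  have "AE \<omega> in game_space. 3 * d < \<bar>ruin_time N s \<omega> - T\<bar> \<longrightarrow> \<omega> \<in> B1 \<union> B2 \<union> B3"
    using AE_space AE_game_space_interarrivals_pos
  proof eventually_elim
    case (elim \<omega>)
    show ?case
    proof (rule impI, rule ccontr)
      assume "3 * d < \<bar>ruin_time N s \<omega> - T\<bar>" "\<omega> \<notin> B1 \<union> B2 \<union> B3"
      moreover from this(2) elim(1) have "\<bar>ruin_time N s \<omega> - T\<bar> < 3 * d"
        by (intro ruin_time_close[OF assms(2-5) assms(6)[unfolded S_def] elim(2)])
          (auto simp: B1_def B2_def B3_def j_def S_def not_le)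
      ultimately show False by simp
    qed
  qed
  then have "prob {\<omega>\<in>space game_space. 3 * d < \<bar>ruin_time N s \<omega> - T\<bar>} \<le> prob (B1 \<union> B2 \<union> B3)"
    by (intro finite_measure_mono_AE) auto
  also have "\<dots> \<le> prob (B1 \<union> B2) + prob B3"
    by (rule measure_Un_le) auto
  also have "prob (B1 \<union> B2) \<le> prob B1 + prob B2"
    by (rule measure_Un_le) auto
  also have "prob B1 \<le> ((square_gap s)^2 + real S * (2 * real S)^2) / (d * real N)^4"
    unfolding B1_def S_def by (rule prob_square_gap_ge) (use assms in simp)
  also have "prob B2 \<le> real S / (d * real N)^2"
    unfolding B2_def by (rule prob_arrival_deviation_ge[OF dN])
  also have "prob B3 \<le> real S / (d * real N)^2"
    unfolding B3_def j_def
    by (rule order.trans[OF prob_arrival_deviation_ge[OF dN] divide_right_mono]) auto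
  finally show ?thesis by (simp add: deviation_bound_def S_def)
qed

lemma tendsto_deviation_bound:
  fixes X0 Y0 :: "nat \<Rightarrow> nat" and x0 d :: real
  assumes X0: "(\<lambda>N. real (X0 N) / real N) \<longlonglongrightarrow> x0"
      and Y0: "(\<lambda>N. real (Y0 N) / real N) \<longlonglongrightarrow> x0"
      and "d > 0"
  shows "(\<lambda>N. deviation_bound (X0 N, Y0 N) d N) \<longlonglongrightarrow> 0"
proof -
  define u where "u N = real (X0 N) / real N" for N
  define v where "v N = real (Y0 N) / real N" for N
  let ?g = "\<lambda>N. ((u N^2 - v N^2)^2 + 4 * (u N + v N)^3 * (1 / real N)) / d^4
    + 2 * ((u N + v N) * (1 / real N) / d^2)"
  have "?g \<longlonglongrightarrow> ((x0^2 - x0^2)^2 + 4 * (x0 + x0)^3 * 0) / d^4 + 2 * ((x0 + x0) * 0 / d^2)"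
    unfolding u_def v_def by (intro tendsto_intros X0 Y0 lim_1_over_n) (use \<open>d > 0\<close> in simp_all)
  then have "?g \<longlonglongrightarrow> 0" by simp
  moreover have "\<forall>\<^sub>F N in sequentially. ?g N = deviation_bound (X0 N, Y0 N) d N"
    using eventually_gt_at_top[of 0]
  proof eventually_elim
    case (elim N)
    have gap: "u N^2 - v N^2 = square_gap (X0 N, Y0 N) / real N^2"
      and sum: "u N + v N = real (X0 N + Y0 N) / real N"
      by (simp_all add: u_def v_def square_gap_def power_divide diff_divide_distrib add_divide_distrib)
    have identity: "((g / n^2)^2 + 4 * (S / n)^3 * (1 / n)) / d^4 + 2 * (S / n * (1 / n) / d^2)
        = (g^2 + S * (2 * S)^2) / (d * n)^4 + 2 * (S / (d * n)^2)" if "n > 0" for g S n :: real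
      using that \<open>d > 0\<close> by (simp add: field_simps power2_eq_square power3_eq_cube power4_eq_xxxx)
    show ?case
      unfolding gap sum deviation_bound_def fst_conv snd_conv by (rule identity) (use elim in simp)
  qed
  ultimately show ?thesis by (rule Lim_transform_eventually)
qed

lemma eventually_prob_ruin_time_deviation_le:
  fixes X0 Y0 :: "nat \<Rightarrow> nat" and x0 y0 d :: real
  assumes X0: "(\<lambda>N. real (X0 N) / real N) \<longlonglongrightarrow> x0"
      and Y0: "(\<lambda>N. real (Y0 N) / real N) \<longlonglongrightarrow> y0"
      and "x0 > 0" "y0 > 0" "d > 0"
  shows "\<forall>\<^sub>F N in sequentially. measure game_space
    {\<omega> \<in> space game_space. 3 * d < \<bar>ruin_time N (X0 N, Y0 N) \<omega> - (x0 + y0)\<bar>} \<le> deviation_bound (X0 N, Y0 N) d N"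
proof -
  have pos: "\<forall>\<^sub>F N in sequentially. 0 < X0 N \<and> 0 < Y0 N"
    using order_tendstoD(1)[OF X0 \<open>x0 > 0\<close>] order_tendstoD(1)[OF Y0 \<open>y0 > 0\<close>]
    by eventually_elim (simp add: zero_less_divide_iff)
  have "(\<lambda>N. real (X0 N + Y0 N) / real N) \<longlonglongrightarrow> x0 + y0"
    using tendsto_add[OF X0 Y0] by (simp add: add_divide_distrib)
  from tendstoD[OF this \<open>d > 0\<close>]
  have close: "\<forall>\<^sub>F N in sequentially. \<bar>real (X0 N + Y0 N) / real N - (x0 + y0)\<bar> < d"
    by (simp add: dist_real_def)
  show ?thesis
    using eventually_gt_at_top[of 0] pos close
  proof eventually_elim
    case (elim N)
    then show ?case
      using prob_ruin_time_deviation_le[where s="(X0 N, Y0 N)" and T="x0 + y0"] \<open>d > 0\<close> by simp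
  qed
qed

theorem mainTheorem7:
  fixes X0 Y0 :: "nat \<Rightarrow> nat" and x0 y0 :: real
  assumes "(\<lambda>N. real (X0 N) / real N) \<longlonglongrightarrow> x0"
      and "(\<lambda>N. real (Y0 N) / real N) \<longlonglongrightarrow> y0"
      and "x0 = y0" and "x0 > 0"
  shows "(\<forall>N. ruin_time N (X0 N, Y0 N) \<in> borel_measurable game_space) \<and>
         (\<forall>\<epsilon>>0. (\<lambda>N. measure game_space
              {\<omega> \<in> space game_space. \<bar>ruin_time N (X0 N, Y0 N) \<omega> - (x0 + y0)\<bar> > \<epsilon>})
            \<longlonglongrightarrow> 0)"
proof (intro conjI allI impI borel_measurable_ruin_time)
  fix \<epsilon> :: real assume "\<epsilon> > 0"
  define d where "d = \<epsilon> / 3"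
  have "d > 0" "3 * d = \<epsilon>" using \<open>\<epsilon> > 0\<close> by (simp_all add: d_def)
  have lim: "(\<lambda>N. deviation_bound (X0 N, Y0 N) d N) \<longlonglongrightarrow> 0"
    using assms(1,2) \<open>d > 0\<close> unfolding \<open>x0 = y0\<close> by (rule tendsto_deviation_bound)
  have ev: "\<forall>\<^sub>F N in sequentially. measure game_space
      {\<omega> \<in> space game_space. \<bar>ruin_time N (X0 N, Y0 N) \<omega> - (x0 + y0)\<bar> > \<epsilon>} \<le> deviation_bound (X0 N, Y0 N) d N"
    using eventually_prob_ruin_time_deviation_le[OF assms(1,2) \<open>x0 > 0\<close> _ \<open>d > 0\<close>] assms(3,4)
    unfolding \<open>3 * d = \<epsilon>\<close> by simp
  show "(\<lambda>N. measure game_space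
      {\<omega> \<in> space game_space. \<bar>ruin_time N (X0 N, Y0 N) \<omega> - (x0 + y0)\<bar> > \<epsilon>}) \<longlonglongrightarrow> 0"
    by (rule tendsto_sandwich[OF _ ev tendsto_const lim]) simp
qed

end
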